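(* Let $D$ be a vertex-transitive digraph and let $u\in VD$. Then the subdigraph induced by $\mathrm{desc}(u)$ is a tree if and only if the subdigraph induced by $\mathrm{anc}(u)$ is a tree.
   Context: A digraph is a set with an irreflexive antisymmetric arc relation $\to$. $\mathrm{desc}(u)$ is the set of vertices $v$ for which there is a directed path from $u$ to $v$; $\mathrm{anc}(u)$ is the set of vertices $v$ such that $u\in\mathrm{desc}(v)$. A digraph is called a tree if its underlying undirected graph is a tree. Vertex-transitive: the automorphism group acts transitively on vertices. *)

theory Defs
  imports Main
begin

definition digraph :: "'a set \<Rightarrow> ('a \<times> 'a) set \<Rightarrow> bool" where
  "digraph V A \<longleftrightarrow> A \<subseteq> V \<times> V \<and> irrefl A \<and> antisym A"

definition desc :: "('a \<times> 'a) set \<Rightarrow> 'a \<Rightarrow> 'a set" where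
  "desc A u = {v. (u, v) \<in> A\<^sup>*}"

definition anc :: "('a \<times> 'a) set \<Rightarrow> 'a \<Rightarrow> 'a set" where
  "anc A u = {v. u \<in> desc A v}"

definition digraph_aut :: "'a set \<Rightarrow> ('a \<times> 'a) set \<Rightarrow> ('a \<Rightarrow> 'a) \<Rightarrow> bool" where
  "digraph_aut V A f \<longleftrightarrow> bij_betw f V V \<and>
     (\<forall>x\<in>V. \<forall>y\<in>V. (x, y) \<in> A \<longleftrightarrow> (f x, f y) \<in> A)"

definition vertex_transitive :: "'a set \<Rightarrow> ('a \<times> 'a) set \<Rightarrow> bool" where
  "vertex_transitive V A \<longleftrightarrow> (\<forall>x\<in>V. \<forall>y\<in>V. \<exists>f. digraph_aut V A f \<and> f x = y)"

definition induced_arcs :: "('a \<times> 'a) set \<Rightarrow> 'a set \<Rightarrow> ('a \<times> 'a) set" where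
  "induced_arcs A S = A \<inter> (S \<times> S)"

definition has_cycle :: "'a set \<Rightarrow> ('a \<times> 'a) set \<Rightarrow> bool" where
  "has_cycle S E \<longleftrightarrow> (\<exists>xs. length xs \<ge> 3 \<and> distinct xs \<and> set xs \<subseteq> S \<and>
      (\<forall>i<length xs. (xs ! i, xs ! ((i + 1) mod length xs)) \<in> E))"

definition ugraph_tree :: "'a set \<Rightarrow> ('a \<times> 'a) set \<Rightarrow> bool" where
  "ugraph_tree S E \<longleftrightarrow> S \<noteq> {} \<and>
     (\<forall>x\<in>S. \<forall>y\<in>S. (x, y) \<in> (E \<inter> (S \<times> S))\<^sup>*) \<and> \<not> has_cycle S E"

definition digraph_tree :: "'a set \<Rightarrow> ('a \<times> 'a) set \<Rightarrow> bool" where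
  "digraph_tree S B \<longleftrightarrow> ugraph_tree S (B \<union> B\<inverse>)"

end

theory Submission
  imports Defs "HOL-Library.Transitive_Closure_Table"
begin

text \<open>Every vertex of desc(u) is reached from u and every vertex of anc(u) reaches u inside
  the induced subdigraph, so each of the two is a tree iff its underlying graph has no cycle;
  reversing all arcs swaps desc and anc, so it suffices to turn a cycle in desc(u) into one in
  anc(u). If some vertex w lies on a directed cycle, that cycle lies in anc(w). Otherwise, if
  two distinct descendants x, y of u have a common out-neighbour w, the paths from u to x and
  to y avoid w and close up through w to a cycle in anc(w). In both cases vertex-transitivity
  carries the cycle to anc(u). In the remaining case every vertex of desc(u) has at most one
  in-neighbour there and none of them points back to u, so the distance from u increases by one
  along every arc and desc(u) carries no cycle at all.\<close>

abbreviation has_induced_cycle :: "('a \<times> 'a) set \<Rightarrow> 'a set \<Rightarrow> bool" where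
  "has_induced_cycle A S \<equiv> has_cycle S (induced_arcs A S \<union> (induced_arcs A S)\<inverse>)"

lemma rtrancl_path_successively:
  "rtrancl_path r x xs y \<Longrightarrow> successively r (x # xs) \<and> last (x # xs) = y"
  by (induction rule: rtrancl_path.induct) (auto simp: successively_Cons)

lemma rtrancl_path_Int_Times_set:
  "rtrancl_path (\<lambda>a b. (a, b) \<in> R \<inter> S \<times> S) x xs y \<Longrightarrow> x \<in> S \<Longrightarrow> set (x # xs) \<subseteq> S"
  by (induction rule: rtrancl_path.induct) auto

lemma rtrancl_Int_Times_imp_distinct_walk:
  assumes "(x, y) \<in> (R \<inter> S \<times> S)\<^sup>*" and "x \<in> S"
  obtains xs where "xs \<noteq> []" "hd xs = x" "last xs = y" "distinct xs" "set xs \<subseteq> S"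
    "successively (\<lambda>a b. (a, b) \<in> R) xs"
proof -
  let ?r = "\<lambda>a b. (a, b) \<in> R \<inter> S \<times> S"
  have "?r\<^sup>*\<^sup>* x y"
    using assms(1) by (simp add: rtrancl_def)
  then obtain xs where "rtrancl_path ?r x xs y"
    by (auto simp: rtranclp_eq_rtrancl_path)
  then obtain xs' where path: "rtrancl_path ?r x xs' y" and "distinct (x # xs')"
    by (rule rtrancl_path_distinct)
  moreover have "successively (\<lambda>a b. (a, b) \<in> R) (x # xs')" "last (x # xs') = y"
    using rtrancl_path_successively[OF path] by (auto elim: successively_mono)
  moreover have "set (x # xs') \<subseteq> S"
    using rtrancl_path_Int_Times_set[OF path assms(2)] .
  ultimately show thesis
    using that[of "x # xs'"] by simp
qed

lemma rtrancl_Int_Times_if_ancestors_in: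
  assumes "(a, c) \<in> A\<^sup>*" and "\<And>v. (v, c) \<in> A\<^sup>* \<Longrightarrow> v \<in> S"
  shows "(a, c) \<in> (A \<inter> S \<times> S)\<^sup>*"
  using assms(1)
proof (induction rule: converse_rtrancl_induct)
  case (step y z)
  then have "y \<in> S" "z \<in> S"
    using assms(2) by (blast intro: converse_rtrancl_into_rtrancl)+
  with step show ?case
    by (blast intro: converse_rtrancl_into_rtrancl)
qed simp

lemma rtrancl_Un_converse_sym:
  "(x, y) \<in> (B \<union> B\<inverse>)\<^sup>* \<Longrightarrow> (y, x) \<in> (B \<union> B\<inverse>)\<^sup>*"
  by (rule symD[OF sym_rtrancl]) (auto simp: sym_def)

lemma has_cycleI:
  assumes "distinct xs" "length xs \<ge> 3" "set xs \<subseteq> S"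
    and "successively (\<lambda>a b. (a, b) \<in> E) xs" "(last xs, hd xs) \<in> E"
  shows "has_cycle S E"
  unfolding has_cycle_def
proof (intro exI conjI allI impI)
  fix i assume i: "i < length xs"
  show "(xs ! i, xs ! ((i + 1) mod length xs)) \<in> E"
  proof (cases "Suc i < length xs")
    case True
    then show ?thesis using successively_nth[OF assms(4)] by simp
  next
    case False
    then have "i = length xs - 1" "Suc i = length xs" "xs \<noteq> []" using i by auto
    then show ?thesis
      using assms(5) by (simp add: last_conv_nth hd_conv_nth)
  qed
qed (use assms in auto)

lemma has_cycle_image:
  assumes "has_cycle S E" and "inj_on f S" and "f ` S \<subseteq> T"
    and "\<And>x y. x \<in> S \<Longrightarrow> y \<in> S \<Longrightarrow> (x, y) \<in> E \<Longrightarrow> (f x, f y) \<in> E'"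
  shows "has_cycle T E'"
proof -
  obtain xs where xs: "length xs \<ge> 3" "distinct xs" "set xs \<subseteq> S"
    "\<forall>i<length xs. (xs ! i, xs ! ((i + 1) mod length xs)) \<in> E"
    using assms(1) unfolding has_cycle_def by blast
  have "(i + 1) mod length xs < length xs" for i
    using xs(1) by (intro mod_less_divisor) linarith
  then have "\<forall>i<length xs. (map f xs ! i, map f xs ! ((i + 1) mod length xs)) \<in> E'"
    using xs(3,4) assms(4) by (auto simp: subset_iff)
  moreover have "distinct (map f xs)"
    using xs(2,3) assms(2) by (simp add: distinct_map inj_on_subset)
  ultimately show ?thesis
    unfolding has_cycle_def using xs(1,3) assms(3) by (intro exI[of _ "map f xs"]) auto
qed

lemma desc_converse: "desc (A\<inverse>) u = anc A u"
  by (auto simp: desc_def anc_def rtrancl_converse)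

lemma anc_converse: "anc (A\<inverse>) u = desc A u"
  by (auto simp: desc_def anc_def rtrancl_converse)

lemma induced_arcs_converse: "induced_arcs (A\<inverse>) S = (induced_arcs A S)\<inverse>"
  by (auto simp: induced_arcs_def)

lemma has_induced_cycle_converse: "has_induced_cycle (A\<inverse>) S \<longleftrightarrow> has_induced_cycle A S"
  by (simp add: induced_arcs_converse Un_commute)

lemma digraph_tree_converse: "digraph_tree S (B\<inverse>) \<longleftrightarrow> digraph_tree S B"
  by (simp add: digraph_tree_def Un_commute)

lemma digraph_converse: "digraph V A \<Longrightarrow> digraph V (A\<inverse>)"
  by (auto simp: digraph_def irrefl_def antisym_def)

lemma digraph_aut_converse: "digraph_aut V (A\<inverse>) f \<longleftrightarrow> digraph_aut V A f"
  by (auto simp: digraph_aut_def)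

lemma vertex_transitive_converse: "vertex_transitive V A \<Longrightarrow> vertex_transitive V (A\<inverse>)"
  by (simp add: vertex_transitive_def digraph_aut_converse)

lemma anc_connected:
  assumes "x \<in> anc A u"
  shows "(x, u) \<in> (induced_arcs A (anc A u))\<^sup>*"
  unfolding induced_arcs_def
  by (rule rtrancl_Int_Times_if_ancestors_in) (use assms in \<open>auto simp: anc_def desc_def\<close>)

lemma digraph_tree_iff_not_has_induced_cycle:
  assumes "r \<in> S" and "\<And>x. x \<in> S \<Longrightarrow> (x, r) \<in> (induced_arcs A S)\<^sup>*"
  shows "digraph_tree S (induced_arcs A S) \<longleftrightarrow> \<not> has_induced_cycle A S"
proof -
  let ?E = "induced_arcs A S \<union> (induced_arcs A S)\<inverse>"
  have "?E \<inter> S \<times> S = ?E" by (auto simp: induced_arcs_def)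
  moreover have "(x, y) \<in> ?E\<^sup>*" if "x \<in> S" "y \<in> S" for x y
  proof -
    have "(x, r) \<in> ?E\<^sup>*" "(y, r) \<in> ?E\<^sup>*"
      using assms(2) that rtrancl_mono[of "induced_arcs A S" ?E] by blast+
    then show ?thesis by (metis rtrancl_trans rtrancl_Un_converse_sym)
  qed
  ultimately show ?thesis
    using assms(1) by (auto simp: digraph_tree_def ugraph_tree_def)
qed

lemma digraph_tree_anc_iff:
  "digraph_tree (anc A u) (induced_arcs A (anc A u)) \<longleftrightarrow> \<not> has_induced_cycle A (anc A u)"
proof (rule digraph_tree_iff_not_has_induced_cycle)
  show "u \<in> anc A u" by (simp add: anc_def desc_def)
qed (rule anc_connected)

lemma digraph_tree_desc_iff:
  "digraph_tree (desc A u) (induced_arcs A (desc A u)) \<longleftrightarrow> \<not> has_induced_cycle A (desc A u)"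
  using digraph_tree_anc_iff[of "A\<inverse>" u]
  unfolding has_induced_cycle_converse
  unfolding anc_converse induced_arcs_converse digraph_tree_converse .

lemma has_induced_cycle_image:
  assumes "has_induced_cycle A S" and "inj_on f S" and "f ` S \<subseteq> T"
    and "\<And>x y. x \<in> S \<Longrightarrow> y \<in> S \<Longrightarrow> (x, y) \<in> A \<Longrightarrow> (f x, f y) \<in> A'"
  shows "has_induced_cycle A' T"
  using assms(1,2,3) by (rule has_cycle_image) (use assms in \<open>auto simp: induced_arcs_def\<close>)

lemma anc_subset:
  assumes "A \<subseteq> V \<times> V" and "w \<in> V"
  shows "anc A w \<subseteq> V"
proof
  fix v assume "v \<in> anc A w"
  then have "(v, w) \<in> A\<^sup>*" by (simp add: anc_def desc_def)
  then show "v \<in> V"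
    by (cases rule: converse_rtranclE) (use assms in auto)
qed

lemma digraph_aut_rtrancl:
  assumes "digraph_aut V A f" and "A \<subseteq> V \<times> V" and "(p, q) \<in> A\<^sup>*"
  shows "(f p, f q) \<in> A\<^sup>*"
  using assms(3)
proof (induction rule: rtrancl_induct)
  case (step y z)
  then have "(f y, f z) \<in> A"
    using assms(1,2) by (auto simp: digraph_aut_def)
  with step.IH show ?case by simp
qed simp

lemma digraph_aut_image_anc:
  assumes "digraph_aut V A f" and "A \<subseteq> V \<times> V"
  shows "f ` anc A w \<subseteq> anc A (f w)"
  using digraph_aut_rtrancl[OF assms] by (auto simp: anc_def desc_def)

lemma vertex_transitive_has_induced_cycle_anc:
  assumes "digraph V A" and "vertex_transitive V A" and "w \<in> V" and "u \<in> V"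
    and "has_induced_cycle A (anc A w)"
  shows "has_induced_cycle A (anc A u)"
proof -
  obtain f where f: "digraph_aut V A f" "f w = u"
    using assms(2-4) unfolding vertex_transitive_def by blast
  have AV: "A \<subseteq> V \<times> V" using assms(1) by (simp add: digraph_def)
  have anc_V: "anc A w \<subseteq> V" using anc_subset[OF AV assms(3)] .
  show ?thesis
  proof (rule has_induced_cycle_image[OF assms(5)])
    show "inj_on f (anc A w)"
      using f(1) anc_V by (auto simp: digraph_aut_def dest: bij_betw_imp_inj_on intro: inj_on_subset)
    show "f ` anc A w \<subseteq> anc A u"
      using digraph_aut_image_anc[OF f(1) AV, of w] f(2) by simp
    show "(f x, f y) \<in> A" if "x \<in> anc A w" "y \<in> anc A w" "(x, y) \<in> A" for x y
      using f(1) anc_V that by (auto simp: digraph_aut_def)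
  qed
qed

lemma directed_cycle_imp_has_induced_cycle_anc:
  assumes "irrefl A" and "antisym A" and "b \<in> desc A w" and "(b, w) \<in> A"
  shows "has_induced_cycle A (anc A w)"
proof -
  let ?S = "anc A w"
  have reaches_w: "v \<in> ?S" if "(v, b) \<in> A\<^sup>*" for v
    using that assms(4) by (simp add: anc_def desc_def)
  have "(w, b) \<in> (A \<inter> ?S \<times> ?S)\<^sup>*"
    using assms(3) reaches_w by (intro rtrancl_Int_Times_if_ancestors_in) (auto simp: desc_def)
  then obtain xs where xs: "xs \<noteq> []" "hd xs = w" "last xs = b" "distinct xs" "set xs \<subseteq> ?S"
    "successively (\<lambda>a c. (a, c) \<in> A) xs"
    by (rule rtrancl_Int_Times_imp_distinct_walk) (simp add: anc_def desc_def)
  have "b \<noteq> w" using assms(1,4) by (auto simp: irrefl_def)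
  have "length xs \<ge> 3"
  proof -
    have "length xs \<noteq> 1" using xs(1-3) \<open>b \<noteq> w\<close> by (auto simp: length_Suc_conv)
    moreover have "length xs \<noteq> 2"
    proof
      assume "length xs = 2"
      then have "xs = [w, b]" using xs(2,3) by (auto simp: numeral_2_eq_2 length_Suc_conv)
      then have "(w, b) \<in> A" using xs(6) by simp
      with assms(2,4) \<open>b \<noteq> w\<close> show False by (auto simp: antisym_def)
    qed
    ultimately show ?thesis using xs(1) by (cases "length xs") (auto simp: numeral_3_eq_3)
  qed
  moreover have "successively (\<lambda>a c. (a, c) \<in> induced_arcs A ?S \<union> (induced_arcs A ?S)\<inverse>) xs"
    using xs(5,6) by (auto elim!: successively_mono simp: induced_arcs_def)
  moreover have "(last xs, hd xs) \<in> induced_arcs A ?S"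
    using xs(1-3,5) assms(4) by (auto simp: induced_arcs_def)
  ultimately show ?thesis
    using xs(4,5) by (intro has_cycleI) auto
qed

lemma common_out_neighbour_imp_has_induced_cycle_anc:
  assumes no_back: "\<And>b. b \<in> desc A w \<Longrightarrow> (b, w) \<notin> A"
    and "(x, w) \<in> A" and "(y, w) \<in> A" and "x \<noteq> y"
    and "(r, x) \<in> A\<^sup>*" and "(r, y) \<in> A\<^sup>*"
  shows "has_induced_cycle A (anc A w)"
proof -
  let ?S = "anc A w"
  let ?S' = "anc A w - {w}"
  let ?B = "induced_arcs A ?S'"
  have in_S': "v \<in> ?S'" if "(v, z) \<in> A\<^sup>*" and "(z, w) \<in> A" for v z
    using that no_back[of z] by (auto simp: anc_def desc_def)
  have "(r, z) \<in> (?B \<union> ?B\<inverse>)\<^sup>*" if "(r, z) \<in> A\<^sup>*" and "(z, w) \<in> A" for z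
  proof -
    have "(r, z) \<in> ?B\<^sup>*"
      unfolding induced_arcs_def using that in_S' by (blast intro: rtrancl_Int_Times_if_ancestors_in)
    then show ?thesis by (rule rtrancl_mono[THEN subsetD, rotated]) blast
  qed
  then have "(x, y) \<in> (?B \<union> ?B\<inverse>)\<^sup>*"
    using assms(2-6) by (blast intro: rtrancl_trans rtrancl_Un_converse_sym)
  moreover have "(?B \<union> ?B\<inverse>) \<inter> ?S' \<times> ?S' = ?B \<union> ?B\<inverse>"
    by (auto simp: induced_arcs_def)
  ultimately obtain ps where ps: "ps \<noteq> []" "hd ps = x" "last ps = y" "distinct ps" "set ps \<subseteq> ?S'"
    "successively (\<lambda>a c. (a, c) \<in> ?B \<union> ?B\<inverse>) ps"
    using rtrancl_Int_Times_imp_distinct_walk[of x y "?B \<union> ?B\<inverse>" ?S'] in_S'[OF _ assms(2)] by auto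
  let ?E = "induced_arcs A ?S \<union> (induced_arcs A ?S)\<inverse>"
  have w_S: "w \<in> ?S" by (simp add: anc_def desc_def)
  have "x \<in> ?S" "y \<in> ?S"
    using ps(5) hd_in_set[OF ps(1)] last_in_set[OF ps(1)] unfolding ps(2,3) by auto
  have "length ps \<noteq> 1" using ps(1-3) assms(4) by (auto simp: length_Suc_conv)
  then have "length (ps @ [w]) \<ge> 3" using ps(1) by (cases ps) (auto simp: Suc_le_eq)
  moreover have "successively (\<lambda>a c. (a, c) \<in> ?E) (ps @ [w])"
    using ps(1,3,6) \<open>y \<in> ?S\<close> w_S assms(3)
    by (auto simp: successively_append_iff induced_arcs_def elim!: successively_mono)
  moreover have "(last (ps @ [w]), hd (ps @ [w])) \<in> ?E"
    using ps(1,2) \<open>x \<in> ?S\<close> w_S assms(2) by (simp add: induced_arcs_def)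
  ultimately show ?thesis
    using ps(4,5) w_S by (intro has_cycleI) auto
qed

lemma not_has_cycle_if_graded:
  assumes level: "\<And>a v. a \<in> S \<Longrightarrow> v \<in> S \<Longrightarrow> (a, v) \<in> B \<Longrightarrow> d v = Suc (d a)"
    and unique_in: "\<And>a b v. a \<in> S \<Longrightarrow> b \<in> S \<Longrightarrow> v \<in> S \<Longrightarrow> (a, v) \<in> B \<Longrightarrow> (b, v) \<in> B \<Longrightarrow> a = b"
  shows "\<not> has_cycle S (B \<union> B\<inverse>)"
proof
  assume "has_cycle S (B \<union> B\<inverse>)"
  then obtain xs where xs: "length xs \<ge> 3" "distinct xs" "set xs \<subseteq> S"
    and adj: "\<And>j. j < length xs \<Longrightarrow> (xs ! j, xs ! (Suc j mod length xs)) \<in> B \<union> B\<inverse>"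
    unfolding has_cycle_def by auto
  define n where "n = length xs"
  have in_S: "xs ! k \<in> S" if "k < n" for k
    using xs(3) that by (auto simp: n_def)
  obtain i where i: "i < n" and max: "\<And>k. k < n \<Longrightarrow> d (xs ! k) \<le> d (xs ! i)"
  proof -
    have "Max (d ` set xs) \<in> d ` set xs" using xs(1) by (intro Max_in) auto
    then obtain i where "i < n" "d (xs ! i) = Max (d ` set xs)"
      by (auto simp: n_def in_set_conv_nth)
    then show thesis by (intro that) (auto simp: n_def)
  qed
  \<comment> \<open>A vertex of maximal level has no out-arc on the cycle, so both its cycle neighbours are in-neighbours.\<close>
  have arc_into_max: "(xs ! k, xs ! i) \<in> B"
    if "k < n" and "(xs ! i, xs ! k) \<in> B \<union> B\<inverse> \<or> (xs ! k, xs ! i) \<in> B \<union> B\<inverse>" for k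
    using that max[OF that(1)] level[OF in_S[OF i] in_S[OF that(1)]] by auto
  define k1 where "k1 = (if Suc i = n then 0 else Suc i)"
  define k2 where "k2 = (if i = 0 then n - 1 else i - 1)"
  have "n \<ge> 3" using xs(1) by (simp add: n_def)
  then have k: "k1 < n" "k2 < n" "Suc i mod n = k1" "Suc k2 mod n = i" "k1 \<noteq> k2"
    using i by (auto simp: k1_def k2_def)
  have "(xs ! k1, xs ! i) \<in> B" "(xs ! k2, xs ! i) \<in> B"
    using arc_into_max adj[of i] adj[of k2] i k by (auto simp: n_def)
  then have "xs ! k1 = xs ! k2"
    using unique_in in_S i k by blast
  then show False
    using xs(2) k by (simp add: n_def nth_eq_iff_index_eq)
qed

lemma desc_graded:
  assumes no_back: "\<And>b. b \<in> desc A u \<Longrightarrow> (b, u) \<notin> A"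
    and unique_in: "\<And>a b v. a \<in> desc A u \<Longrightarrow> b \<in> desc A u \<Longrightarrow> (a, v) \<in> A \<Longrightarrow> (b, v) \<in> A \<Longrightarrow> a = b"
  obtains d where "\<And>a v. a \<in> desc A u \<Longrightarrow> (a, v) \<in> A \<Longrightarrow> d v = Suc (d a)"
proof
  define d where "d v = (LEAST n. (u, v) \<in> A ^^ n)" for v
  have d_relpow: "(u, v) \<in> A ^^ d v" if "v \<in> desc A u" for v
  proof -
    have "\<exists>n. (u, v) \<in> A ^^ n" using that by (simp add: desc_def rtrancl_power)
    then show ?thesis unfolding d_def by (rule LeastI_ex)
  qed
  have d_le: "d v \<le> n" if "(u, v) \<in> A ^^ n" for v n
    unfolding d_def using that by (rule Least_le)
  fix a v assume a: "a \<in> desc A u" and av: "(a, v) \<in> A"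
  then have v: "v \<in> desc A u" and "v \<noteq> u"
    using no_back by (auto simp: desc_def)
  then obtain m where dv: "d v = Suc m"
    using d_relpow[OF v] by (cases "d v") auto
  with d_relpow[OF v] obtain z where uz: "(u, z) \<in> A ^^ m" and "(z, v) \<in> A"
    by (metis relpow_Suc_E)
  moreover have "z \<in> desc A u"
    using uz by (simp add: desc_def relpow_imp_rtrancl)
  ultimately have "z = a" using unique_in a av by blast
  with uz have "d a \<le> m" by (simp add: d_le)
  moreover have "d v \<le> Suc (d a)"
    using relpow_Suc_I[OF d_relpow[OF a] av] by (rule d_le)
  ultimately show "d v = Suc (d a)" using dv by simp
qed

lemma not_has_induced_cycle_desc:
  assumes "\<And>b. b \<in> desc A u \<Longrightarrow> (b, u) \<notin> A"
    and "\<And>a b v. a \<in> desc A u \<Longrightarrow> b \<in> desc A u \<Longrightarrow> (a, v) \<in> A \<Longrightarrow> (b, v) \<in> A \<Longrightarrow> a = b"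
  shows "\<not> has_induced_cycle A (desc A u)"
proof -
  obtain d where "\<And>a v. a \<in> desc A u \<Longrightarrow> (a, v) \<in> A \<Longrightarrow> d v = Suc (d a)"
    by (rule desc_graded[of A u]) (use assms in blast)+
  then show ?thesis
    by (intro not_has_cycle_if_graded[where d = d]) (use assms(2) in \<open>auto simp: induced_arcs_def\<close>)
qed

lemma has_induced_cycle_anc_if_desc:
  assumes dg: "digraph V A" and vt: "vertex_transitive V A" and u: "u \<in> V"
    and cyc: "has_induced_cycle A (desc A u)"
  shows "has_induced_cycle A (anc A u)"
proof -
  have AV: "A \<subseteq> V \<times> V" and "irrefl A" "antisym A"
    using dg by (simp_all add: digraph_def)
  note transfer = vertex_transitive_has_induced_cycle_anc[OF dg vt _ u]
  show ?thesis
  proof (cases "\<exists>w b. b \<in> desc A w \<and> (b, w) \<in> A")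
    case True
    then obtain w b where "b \<in> desc A w" "(b, w) \<in> A" by blast
    moreover from this have "w \<in> V" using AV by blast
    ultimately show ?thesis
      using directed_cycle_imp_has_induced_cycle_anc[OF \<open>irrefl A\<close> \<open>antisym A\<close>] transfer
      by blast
  next
    case no_directed_cycle: False
    show ?thesis
    proof (cases "\<exists>w x y. x \<in> desc A u \<and> y \<in> desc A u \<and> (x, w) \<in> A \<and> (y, w) \<in> A \<and> x \<noteq> y")
      case True
      then obtain w x y where "x \<in> desc A u" "y \<in> desc A u" "(x, w) \<in> A" "(y, w) \<in> A" "x \<noteq> y"
        by blast
      then have "w \<in> V" and "has_induced_cycle A (anc A w)"
        using AV no_directed_cycle common_out_neighbour_imp_has_induced_cycle_anc[of A w x y u]
        by (auto simp: desc_def)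
      then show ?thesis using transfer by blast
    next
      case False
      then have "\<not> has_induced_cycle A (desc A u)"
        using no_directed_cycle by (intro not_has_induced_cycle_desc) blast+
      with cyc show ?thesis by contradiction
    qed
  qed
qed

theorem lemma3p3:
  fixes V :: "'a set" and A :: "('a \<times> 'a) set" and u :: 'a
  assumes "digraph V A" and "vertex_transitive V A" and "u \<in> V"
  shows "digraph_tree (desc A u) (induced_arcs A (desc A u)) \<longleftrightarrow>
         digraph_tree (anc A u) (induced_arcs A (anc A u))"
proof -
  have "has_induced_cycle A (desc A u) \<Longrightarrow> has_induced_cycle A (anc A u)"
    using has_induced_cycle_anc_if_desc[OF assms] .
  moreover have "has_induced_cycle A (anc A u) \<Longrightarrow> has_induced_cycle A (desc A u)"
    using has_induced_cycle_anc_if_desc[OF digraph_converse[OF assms(1)]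
        vertex_transitive_converse[OF assms(2)] assms(3)]
    unfolding has_induced_cycle_converse desc_converse anc_converse .
  ultimately show ?thesis
    unfolding digraph_tree_desc_iff digraph_tree_anc_iff by blast
qed

end
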